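(* Let $G$ be a $(2K_2, K_5-e)$-free graph. Then $\chi(G)\le\omega(G)+4$.
   Context: All graphs are finite, simple and undirected. $2K_2$ is the disjoint union of two edges; $K_5-e$ is the complete graph on 5 vertices minus one edge. A graph is $\mathcal F$-free if it has no induced subgraph isomorphic to a member of $\mathcal F$. $\chi$ is the chromatic number and $\omega$ the clique number. *)

theory Defs
  imports Main
begin

definition graph :: "'a set \<Rightarrow> ('a \<Rightarrow> 'a \<Rightarrow> bool) \<Rightarrow> bool" where
  "graph V E \<longleftrightarrow> finite V \<and> (\<forall>u v. E u v \<longrightarrow> E v u) \<and> (\<forall>v. \<not> E v v)
     \<and> (\<forall>u v. E u v \<longrightarrow> u \<in> V \<and> v \<in> V)"

definition contains_induced ::
  "'a set \<Rightarrow> ('a \<Rightarrow> 'a \<Rightarrow> bool) \<Rightarrow> 'b set \<Rightarrow> ('b \<Rightarrow> 'b \<Rightarrow> bool) \<Rightarrow> bool" where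
  "contains_induced V E W F \<longleftrightarrow>
     (\<exists>f. inj_on f W \<and> f ` W \<subseteq> V \<and> (\<forall>x\<in>W. \<forall>y\<in>W. E (f x) (f y) \<longleftrightarrow> F x y))"

definition twoK2_V :: "nat set" where "twoK2_V = {0,1,2,3}"
definition twoK2_E :: "nat \<Rightarrow> nat \<Rightarrow> bool" where
  "twoK2_E x y \<longleftrightarrow> {x,y} = {0,1} \<or> {x,y} = {2,3}"

definition K5e_V :: "nat set" where "K5e_V = {0,1,2,3,4}"
definition K5e_E :: "nat \<Rightarrow> nat \<Rightarrow> bool" where
  "K5e_E x y \<longleftrightarrow> x \<in> K5e_V \<and> y \<in> K5e_V \<and> x \<noteq> y \<and> {x,y} \<noteq> {0,1}"

definition clique :: "'a set \<Rightarrow> ('a \<Rightarrow> 'a \<Rightarrow> bool) \<Rightarrow> 'a set \<Rightarrow> bool" where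
  "clique V E K \<longleftrightarrow> K \<subseteq> V \<and> (\<forall>x\<in>K. \<forall>y\<in>K. x \<noteq> y \<longrightarrow> E x y)"

definition clique_number :: "'a set \<Rightarrow> ('a \<Rightarrow> 'a \<Rightarrow> bool) \<Rightarrow> nat" where
  "clique_number V E = Max (card ` {K. clique V E K})"

definition colouring :: "'a set \<Rightarrow> ('a \<Rightarrow> 'a \<Rightarrow> bool) \<Rightarrow> nat \<Rightarrow> ('a \<Rightarrow> nat) \<Rightarrow> bool" where
  "colouring V E k c \<longleftrightarrow> (\<forall>v\<in>V. c v < k) \<and> (\<forall>u\<in>V. \<forall>v\<in>V. E u v \<longrightarrow> c u \<noteq> c v)"

definition chromatic_number :: "'a set \<Rightarrow> ('a \<Rightarrow> 'a \<Rightarrow> bool) \<Rightarrow> nat" where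
  "chromatic_number V E = (LEAST k. \<exists>c. colouring V E k c)"

end

theory Submission
  imports Defs
begin

text \<open>Fix a maximum clique h 0, \<dots>, h (w - 1). By maximality every vertex outside it misses
  some clique vertex, so by (K5 - e)-freeness it has at most two neighbours in the clique; by
  2K2-freeness the outside vertices missing a common pair of clique vertices are independent.
  Colouring outside vertices by a missed pair, and reusing the colour of a missed clique vertex
  where possible, needs w + 2 colours when w \<ge> 4 and w + 3 otherwise.\<close>

lemma graph_sym: "graph V E \<Longrightarrow> E u v \<Longrightarrow> E v u"
  and graph_irrefl: "graph V E \<Longrightarrow> \<not> E v v"
  and graph_finite: "graph V E \<Longrightarrow> finite V"
  unfolding graph_def by blast+

lemma contains_induced_twoK2I:
  assumes g: "graph V E" and V: "x \<in> V" "y \<in> V" "a \<in> V" "b \<in> V"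
    and e: "E x y" "E a b" "\<not> E x a" "\<not> E x b" "\<not> E y a" "\<not> E y b"
  shows "contains_induced V E twoK2_V twoK2_E"
proof -
  have e': "E y x" "E b a" "\<not> E a x" "\<not> E b x" "\<not> E a y" "\<not> E b y"
    using e graph_sym[OF g] by blast+
  have "x \<noteq> y" "x \<noteq> a" "x \<noteq> b" "y \<noteq> a" "y \<noteq> b" "a \<noteq> b"
    using e e' graph_irrefl[OF g] by metis+
  moreover define f :: "nat \<Rightarrow> _" where "f n = [x, y, a, b] ! n" for n
  ultimately show ?thesis
    unfolding contains_induced_def twoK2_V_def twoK2_E_def
    using V e e' graph_irrefl[OF g]
    by (intro exI[of _ f]) (auto simp: f_def inj_on_def doubleton_eq_iff)
qed

lemma contains_induced_K5eI:
  assumes g: "graph V E" and V: "x \<in> V" "y \<in> V" "a \<in> V" "b \<in> V" "c \<in> V"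
    and "x \<noteq> y" and e: "\<not> E x y" "E x a" "E x b" "E x c" "E y a" "E y b" "E y c"
      "E a b" "E a c" "E b c"
  shows "contains_induced V E K5e_V K5e_E"
proof -
  have e': "\<not> E y x" "E a x" "E b x" "E c x" "E a y" "E b y" "E c y" "E b a" "E c a" "E c b"
    using e graph_sym[OF g] by blast+
  have "x \<noteq> a" "x \<noteq> b" "x \<noteq> c" "y \<noteq> a" "y \<noteq> b" "y \<noteq> c" "a \<noteq> b" "a \<noteq> c" "b \<noteq> c"
    using e graph_irrefl[OF g] by metis+
  moreover define f :: "nat \<Rightarrow> _" where "f n = [x, y, a, b, c] ! n" for n
  ultimately show ?thesis
    unfolding contains_induced_def K5e_V_def K5e_E_def
    using V \<open>x \<noteq> y\<close> e e' graph_irrefl[OF g]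
    by (intro exI[of _ f]) (auto simp: f_def inj_on_def doubleton_eq_iff)
qed

lemma finite_clique_cards: "graph V E \<Longrightarrow> finite (card ` {K. clique V E K})"
  by (rule finite_imageI, rule finite_subset[of _ "Pow V"]) (auto simp: clique_def graph_finite)

lemma card_le_clique_number: "graph V E \<Longrightarrow> clique V E K \<Longrightarrow> card K \<le> clique_number V E"
  unfolding clique_number_def by (auto intro: Max_ge finite_clique_cards)

lemma maximum_clique_exists: "graph V E \<Longrightarrow> \<exists>K. clique V E K \<and> card K = clique_number V E"
proof -
  assume "graph V E"
  moreover have "clique V E {}" by (simp add: clique_def)
  ultimately have "clique_number V E \<in> card ` {K. clique V E K}"
    unfolding clique_number_def by (intro Max_in finite_clique_cards) auto
  then show ?thesis by auto
qed

lemma chromatic_number_le: "colouring V E k c \<Longrightarrow> chromatic_number V E \<le> k"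
  unfolding chromatic_number_def by (auto intro: Least_le)

locale indexed_maximum_clique =
  fixes V :: "'a set" and E :: "'a \<Rightarrow> 'a \<Rightarrow> bool" and w :: nat and h :: "nat \<Rightarrow> 'a"
  assumes graph: "graph V E"
    and clique: "clique V E (h ` {..<w})"
    and inj: "inj_on h {..<w}"
    and maximum: "\<And>K. clique V E K \<Longrightarrow> card K \<le> w"
begin

abbreviation K :: "'a set" where "K \<equiv> h ` {..<w}"

lemma edge_sym: "E u v \<Longrightarrow> E v u"
  using graph by (rule graph_sym)

lemma clique_in_V: "i < w \<Longrightarrow> h i \<in> V"
  using clique by (auto simp: clique_def)

lemma clique_edge: "i < w \<Longrightarrow> j < w \<Longrightarrow> i \<noteq> j \<Longrightarrow> E (h i) (h j)"
  using clique inj by (simp add: clique_def inj_on_def) blast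

lemma outside_non_neighbour:
  assumes "x \<in> V" "x \<notin> K"
  shows "\<exists>i<w. \<not> E x (h i)"
proof (rule ccontr)
  assume "\<not> ?thesis"
  then have "clique V E (insert x K)"
    using assms clique edge_sym by (auto simp: clique_def)
  then have "card (insert x K) \<le> w" by (rule maximum)
  with assms inj show False by (simp add: card_image)
qed

lemma no_edge_complete_to_all_but_one:
  assumes x: "x \<in> V" "x \<notin> K" and y: "y \<in> V" "y \<notin> K" and "E x y" and "i < w"
    and nx: "\<And>j. j < w \<Longrightarrow> j \<noteq> i \<Longrightarrow> E x (h j)"
    and ny: "\<And>j. j < w \<Longrightarrow> j \<noteq> i \<Longrightarrow> E y (h j)"
  shows False
proof -
  let ?C = "insert x (insert y (K - {h i}))"
  have adj: "E x (h j)" "E (h j) x" "E y (h j)" "E (h j) y" if "j < w" "h j \<noteq> h i" for j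
    using that nx ny edge_sym by blast+
  have "clique V E ?C"
    using clique x y \<open>E x y\<close> edge_sym[OF \<open>E x y\<close>] by (auto simp: clique_def adj)
  then have "card ?C \<le> w" by (rule maximum)
  moreover have "x \<noteq> y" using \<open>E x y\<close> graph_irrefl[OF graph] by auto
  moreover have "card (K - {h i}) = w - 1"
    using inj \<open>i < w\<close> by (simp add: card_image)
  ultimately show False using x y \<open>i < w\<close> by simp
qed

lemma outside_not_three_neighbours:
  assumes "\<not> contains_induced V E K5e_V K5e_E"
    and x: "x \<in> V" "x \<notin> K" and ijk: "i < w" "j < w" "k < w" "i \<noteq> j" "i \<noteq> k" "j \<noteq> k"
  shows "\<not> (E x (h i) \<and> E x (h j) \<and> E x (h k))"
proof
  assume adj: "E x (h i) \<and> E x (h j) \<and> E x (h k)"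
  obtain l where l: "l < w" "\<not> E x (h l)" using outside_non_neighbour[OF x] by blast
  with adj have "l \<noteq> i" "l \<noteq> j" "l \<noteq> k" by auto
  with x l ijk adj have "contains_induced V E K5e_V K5e_E"
    by (intro contains_induced_K5eI[OF graph, of x "h l" "h i" "h j" "h k"])
      (auto simp: clique_in_V clique_edge edge_sym)
  with assms(1) show False ..
qed

definition misses_pair :: "'a \<Rightarrow> nat \<Rightarrow> nat \<Rightarrow> bool" where
  "misses_pair x i j \<longleftrightarrow> i < w \<and> j < w \<and> i \<noteq> j \<and> \<not> E x (h i) \<and> \<not> E x (h j)"

lemma common_missed_pair_not_adjacent:
  assumes "\<not> contains_induced V E twoK2_V twoK2_E"
    and "u \<in> V" "v \<in> V" "misses_pair u i j" "misses_pair v i j"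
  shows "\<not> E u v"
  using assms contains_induced_twoK2I[OF graph, of u v "h i" "h j"]
  by (auto simp: misses_pair_def clique_in_V clique_edge)

text \<open>An outside colour i < w is shared with the clique vertex h i.\<close>

definition outside_colouring :: "nat \<Rightarrow> ('a \<Rightarrow> nat) \<Rightarrow> bool" where
  "outside_colouring k d \<longleftrightarrow>
     (\<forall>x\<in>V - K. d x < k \<and> (d x < w \<longrightarrow> \<not> E x (h (d x)))) \<and>
     (\<forall>u\<in>V - K. \<forall>v\<in>V - K. E u v \<longrightarrow> d u \<noteq> d v)"

lemma outside_colouring_mono: "outside_colouring k d \<Longrightarrow> k \<le> k' \<Longrightarrow> outside_colouring k' d"
  unfolding outside_colouring_def by (blast intro: less_le_trans)

lemma colouring_of_outside_colouring:
  assumes d: "outside_colouring k d" and "w \<le> k"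
  shows "colouring V E k (\<lambda>x. if x \<in> K then the_inv_into {..<w} h x else d x)"
    (is "colouring V E k ?c")
proof -
  have index: "the_inv_into {..<w} h (h i) = i" if "i < w" for i
    using inj that by (simp add: the_inv_into_f_f)
  have "?c x < k" if "x \<in> V" for x
    using that d \<open>w \<le> k\<close> by (auto simp: outside_colouring_def index)
  moreover have "?c u \<noteq> ?c v" if "u \<in> V" "v \<in> V" "E u v" for u v
  proof (cases "u \<in> K"; cases "v \<in> K")
    assume "u \<in> K" "v \<in> K"
    with \<open>E u v\<close> graph_irrefl[OF graph] show ?thesis by (auto simp: index)
  next
    assume "u \<in> K" "v \<notin> K"
    with that d edge_sym show ?thesis by (auto simp: outside_colouring_def index)
  next
    assume "u \<notin> K" "v \<in> K"
    with that d show ?thesis by (auto simp: outside_colouring_def index)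
  next
    assume "u \<notin> K" "v \<notin> K"
    with that d show ?thesis by (auto simp: outside_colouring_def)
  qed
  ultimately show ?thesis by (simp add: colouring_def)
qed

text \<open>For w \<ge> 4 an outside vertex has at most two neighbours among h 0, \<dots>, h 3, so it
  misses one of the six pairs of them; vertices missing the same pair are independent. The
  four pairs {i, i + 1 mod 4} get the colour i of a clique vertex they miss, the two
  diagonals get two new colours.\<close>

lemma outside_colouring_large_clique:
  assumes no_2K2: "\<not> contains_induced V E twoK2_V twoK2_E"
    and no_K5e: "\<not> contains_induced V E K5e_V K5e_E" and "4 \<le> w"
  shows "\<exists>d. outside_colouring (w + 2) d"
proof -
  define pair where
    "pair c = (if c = 0 then (0, 1) else if c = 1 then (1, 2) else if c = 2 then (2, 3)
      else if c = 3 then (0, 3) else if c = w then (0, 2) else (1 :: nat, 3 :: nat))" for c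
  define C where "C = {0, 1, 2, 3, w, w + 1}"
  have missed: "\<exists>c\<in>C. misses_pair x (fst (pair c)) (snd (pair c))" if x: "x \<in> V" "x \<notin> K" for x
  proof -
    have "\<not> (E x (h i) \<and> E x (h j) \<and> E x (h k))"
      if "i < j" "j < k" "k < 4" for i j k
      using that \<open>4 \<le> w\<close> by (intro outside_not_three_neighbours[OF no_K5e x]) auto
    from this[of 0 1 2] this[of 0 1 3] this[of 0 2 3] this[of 1 2 3] \<open>4 \<le> w\<close>
    show ?thesis by (auto simp: C_def pair_def misses_pair_def)
  qed
  then have "\<forall>x\<in>V - K. \<exists>c. c \<in> C \<and> misses_pair x (fst (pair c)) (snd (pair c))"
    by (auto simp only: Bex_def Diff_iff)
  from bchoice[OF this] obtain d
    where d: "\<And>x. x \<in> V - K \<Longrightarrow> d x \<in> C \<and> misses_pair x (fst (pair (d x))) (snd (pair (d x)))"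
    by blast
  have "outside_colouring (w + 2) d"
    unfolding outside_colouring_def
  proof (intro conjI ballI impI)
    fix x assume "x \<in> V - K"
    with d[OF this] \<open>4 \<le> w\<close> show "d x < w + 2" and "d x < w \<Longrightarrow> \<not> E x (h (d x))"
      by (auto simp: C_def pair_def misses_pair_def)
  next
    fix u v assume uv: "u \<in> V - K" "v \<in> V - K" "E u v"
    show "d u \<noteq> d v"
    proof
      assume "d u = d v"
      with d[OF uv(1)] d[OF uv(2)] uv show False
        using common_missed_pair_not_adjacent[OF no_2K2, of u v] by auto
    qed
  qed
  then show ?thesis by blast
qed

text \<open>For w \<le> 3 an outside vertex missing only h i gets colour i; two adjacent such vertices
  with the same i would extend the rest of the clique to a larger one. Every other outside vertex
  misses a pair of clique vertices, which gives one of three new colours.\<close>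

lemma outside_colouring_small_clique:
  assumes no_2K2: "\<not> contains_induced V E twoK2_V twoK2_E" and "w \<le> 3"
  shows "\<exists>d. outside_colouring (w + 3) d"
proof -
  define pair where
    "pair c = (if c = w then (0, 1) else if c = w + 1 then (0, 2) else (1 :: nat, 2 :: nat))" for c
  define good where
    "good x c \<longleftrightarrow> (c < w \<and> \<not> E x (h c) \<and> (\<forall>j<w. j \<noteq> c \<longrightarrow> E x (h j))) \<or>
       (w \<le> c \<and> c < w + 3 \<and> misses_pair x (fst (pair c)) (snd (pair c)))" for x c
  have "\<exists>c. good x c" if x: "x \<in> V" "x \<notin> K" for x
  proof -
    obtain i where i: "i < w" "\<not> E x (h i)" using outside_non_neighbour[OF x] by blast
    show ?thesis
    proof (cases "\<forall>j<w. j \<noteq> i \<longrightarrow> E x (h j)")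
      case True
      with i show ?thesis unfolding good_def by blast
    next
      case False
      then obtain j where j: "j < w" "j \<noteq> i" "\<not> E x (h j)" by blast
      have "i = 0 \<or> i = 1 \<or> i = 2" "j = 0 \<or> j = 1 \<or> j = 2" using i j \<open>w \<le> 3\<close> by auto
      with i j have "good x (w + i + j - 1)"
        by (auto simp: good_def pair_def misses_pair_def)
      then show ?thesis ..
    qed
  qed
  then have "\<forall>x\<in>V - K. \<exists>c. good x c" by blast
  from bchoice[OF this] obtain d where d: "\<And>x. x \<in> V - K \<Longrightarrow> good x (d x)" by blast
  have "outside_colouring (w + 3) d"
    unfolding outside_colouring_def
  proof (intro conjI ballI impI)
    fix x assume "x \<in> V - K"
    with d[OF this] show "d x < w + 3" and "d x < w \<Longrightarrow> \<not> E x (h (d x))"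
      by (auto simp: good_def)
  next
    fix u v assume uv: "u \<in> V - K" "v \<in> V - K" "E u v"
    show "d u \<noteq> d v"
    proof
      assume same: "d u = d v"
      show False
      proof (cases "d u < w")
        case True
        with d[OF uv(1)] d[OF uv(2)] same uv show False
          using no_edge_complete_to_all_but_one[of u v "d u"] by (auto simp: good_def)
      next
        case False
        with d[OF uv(1)] d[OF uv(2)] same uv show False
          using common_missed_pair_not_adjacent[OF no_2K2, of u v] by (auto simp: good_def)
      qed
    qed
  qed
  then show ?thesis by blast
qed

end

lemma indexed_maximum_clique_exists:
  assumes "graph V E"
  shows "\<exists>h. indexed_maximum_clique V E (clique_number V E) h"
proof -
  obtain K where K: "clique V E K" "card K = clique_number V E"
    using maximum_clique_exists[OF assms] by blast
  then have "finite K"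
    using assms by (auto simp: clique_def graph_finite intro: finite_subset)
  then obtain h where "bij_betw h {..<card K} K"
    using ex_bij_betw_nat_finite by (fastforce simp: atLeast0LessThan)
  with assms K show ?thesis
    by (intro exI[of _ h]) (auto simp: indexed_maximum_clique_def bij_betw_def card_le_clique_number)
qed

theorem chromatic_number_le_clique_number_plus_3:
  assumes "graph V E"
    and no_2K2: "\<not> contains_induced V E twoK2_V twoK2_E"
    and no_K5e: "\<not> contains_induced V E K5e_V K5e_E"
  shows "chromatic_number V E \<le> clique_number V E + 3"
proof -
  let ?w = "clique_number V E"
  obtain h where "indexed_maximum_clique V E ?w h"
    using indexed_maximum_clique_exists[OF assms(1)] by blast
  then interpret indexed_maximum_clique V E ?w h .
  have "\<exists>d. outside_colouring (?w + 3) d"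
  proof (cases "4 \<le> ?w")
    case True
    then obtain d where "outside_colouring (?w + 2) d"
      using outside_colouring_large_clique[OF no_2K2 no_K5e] by blast
    then show ?thesis using outside_colouring_mono[of "?w + 2" d "?w + 3"] by auto
  next
    case False
    then show ?thesis using outside_colouring_small_clique[OF no_2K2] by simp
  qed
  then obtain d where "outside_colouring (?w + 3) d" ..
  then show ?thesis
    using colouring_of_outside_colouring chromatic_number_le by fastforce
qed

theorem corollary3p10:
  fixes V :: "'a set" and E :: "'a \<Rightarrow> 'a \<Rightarrow> bool"
  assumes "graph V E"
    and "\<not> contains_induced V E twoK2_V twoK2_E"
    and "\<not> contains_induced V E K5e_V K5e_E"
  shows "chromatic_number V E \<le> clique_number V E + 4"
  using chromatic_number_le_clique_number_plus_3[OF assms] by simp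

end
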